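(* If $w\in\{[4123],[2341]\}\subseteq S_4$, then there is no $x\in\mathfrak{sl}_4(\mathbb C)$ and Hessenberg space $H\subseteq\mathfrak{sl}_4(\mathbb C)$ such that $\mathcal B(x,H)=X_{w^{-1}}$ in $SL_4(\mathbb C)/B$.
   Context: $B$ is the Borel subgroup of upper triangular matrices in $SL_4(\mathbb C)$, with Lie algebra $\mathfrak b$. Permutations are in one-line notation; $\dot w$ is a scalar multiple in $SL_4(\mathbb C)$ of the permutation matrix with $e_i\mapsto e_{w(i)}$; $X_w$ is the closure of $B\dot wB/B$. A Hessenberg space is a subspace $H\subseteq\mathfrak{sl}_4(\mathbb C)$ with $[\mathfrak b,H]\subseteq H$; $\mathcal B(x,H)=\{gB: g^{-1}xg\in H\}$. *)

theory Defs
  imports "HOL-Analysis.Analysis" "HOL-Library.Numeral_Type"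
begin

text \<open>Matrices in M_4(C) are complex^4^4, indexed by the type 4 = {0,1,2,3}
 (index k of the paper corresponds to element k-1). A permutation in one-line
 notation is a bijection of type 4.\<close>

type_synonym mat4 = "complex^4^4"

definition SL4 :: "mat4 set" where
  "SL4 = {g. det g = 1}"

definition sl4 :: "mat4 set" where
  "sl4 = {x. trace x = 0}"

definition upper_tri :: "mat4 \<Rightarrow> bool" where
  "upper_tri A \<longleftrightarrow> (\<forall>i j. j < i \<longrightarrow> A $ i $ j = 0)"

definition Borel :: "mat4 set" where
  "Borel = {b \<in> SL4. upper_tri b}"

definition borel_alg :: "mat4 set" where
  "borel_alg = {y \<in> sl4. upper_tri y}"

definition cscale :: "complex \<Rightarrow> mat4 \<Rightarrow> mat4" where
  "cscale c A = (\<chi> i j. c * A $ i $ j)"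

definition bracket :: "mat4 \<Rightarrow> mat4 \<Rightarrow> mat4" where
  "bracket y h = y ** h - h ** y"

definition csubspace_sl4 :: "mat4 set \<Rightarrow> bool" where
  "csubspace_sl4 H \<longleftrightarrow> H \<subseteq> sl4 \<and> 0 \<in> H \<and> (\<forall>x\<in>H. \<forall>y\<in>H. x + y \<in> H)
      \<and> (\<forall>c. \<forall>x\<in>H. cscale c x \<in> H)"

definition hessenberg_space :: "mat4 set \<Rightarrow> bool" where
  "hessenberg_space H \<longleftrightarrow> csubspace_sl4 H \<and> (\<forall>y\<in>borel_alg. \<forall>h\<in>H. bracket y h \<in> H)"

definition coset :: "mat4 \<Rightarrow> mat4 set" where
  "coset g = {g ** b | b. b \<in> Borel}"

definition flag :: "mat4 set set" where
  "flag = coset ` SL4"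

definition flag_top :: "mat4 set topology" where
  "flag_top = topology (\<lambda>U. U \<subseteq> flag \<and> openin (top_of_set SL4) {g \<in> SL4. coset g \<in> U})"

text \<open>Permutation matrix e_i \<mapsto> e_{w(i)}, and a scalar multiple of it lying in SL_4.\<close>
definition perm_mat :: "(4 \<Rightarrow> 4) \<Rightarrow> mat4" where
  "perm_mat w = (\<chi> r c. if r = w c then 1 else 0)"

definition wdot :: "(4 \<Rightarrow> 4) \<Rightarrow> mat4" where
  "wdot w = cscale (SOME c. cscale c (perm_mat w) \<in> SL4) (perm_mat w)"

definition schubert :: "(4 \<Rightarrow> 4) \<Rightarrow> mat4 set set" where
  "schubert w = flag_top closure_of (coset ` {b1 ** wdot w ** b2 | b1 b2. b1 \<in> Borel \<and> b2 \<in> Borel})"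

definition hess_var :: "mat4 \<Rightarrow> mat4 set \<Rightarrow> mat4 set set" where
  "hess_var x H = {coset g | g. g \<in> SL4 \<and> matrix_inv g ** x ** g \<in> H}"

text \<open>The permutations [4123] and [2341] in one-line notation (0-based: w(i) = i-1, i+1 mod 4).\<close>
definition w4123 :: "4 \<Rightarrow> 4" where
  "w4123 = (\<lambda>i. if i = 0 then 3 else if i = 1 then 0 else if i = 2 then 1 else 2)"

definition w2341 :: "4 \<Rightarrow> 4" where
  "w2341 = (\<lambda>i. if i = 0 then 1 else if i = 1 then 2 else if i = 2 then 3 else 0)"

end

theory Submission
  imports Defs
begin

text \<open>Let \<open>v = w\<^sup>-\<^sup>1\<close> and suppose \<open>B(x,H) = X\<^sub>v\<close>. Since the cell \<open>B v B/B\<close> lies in \<open>X\<^sub>v\<close>,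
  \<open>v\<^sup>-\<^sup>1 b\<^sup>-\<^sup>1 x b v \<in> H\<close> for all \<open>b \<in> B\<close>, so \<open>x\<close> lies in the \<open>Ad(B)\<close>-stable subspace
  \<open>K = {z. \<forall>b\<in>B. v\<^sup>-\<^sup>1 b\<^sup>-\<^sup>1 z b v \<in> H}\<close>, and \<open>H\<close> is \<open>Ad(B)\<close>-stable as well. A subspace stable
  under the torus and under \<open>ad\<close> of the strictly upper triangular matrices contains the matrix
  unit \<open>E\<^sub>p\<^sub>q\<close> for each nonzero off-diagonal entry \<open>(p,q)\<close> of each of its elements, contains their
  diagonal parts, and its off-diagonal matrix units are closed under moving up and to the right.
  Tracking which matrix units are forced into \<open>K\<close> and then into \<open>H\<close>, a case distinction on a
  single matrix unit of \<open>H\<close> yields a permutation \<open>u\<close> with \<open>u\<^sup>-\<^sup>1 x u \<in> H\<close>, i.e. \<open>uB \<in> B(x,H)\<close>.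
  But \<open>u\<close> violates a rank condition on southwest submatrices that is closed and
  \<open>B\<close>-bi-invariant and holds at \<open>v\<close>, hence on all of \<open>X\<^sub>v\<close>.\<close>

lemma index_4_exhaust: "(i::4) = 0 \<or> i = 1 \<or> i = 2 \<or> i = 3"
proof (induct i)
  case (of_int z)
  then have "z = 0 \<or> z = 1 \<or> z = 2 \<or> z = 3" by fastforce
  then show ?case by auto
qed

lemma UNIV_4_from_0: "(UNIV::4 set) = {0,1,2,3}"
  using index_4_exhaust by auto

lemma less_4_numerals: "(0::4) < 1" "(0::4) < 2" "(0::4) < 3" "(1::4) < 2" "(1::4) < 3" "(2::4) < 3"
  by (simp_all add: less_bit0_def bit0.Rep_0 bit0.Rep_1 bit0.Rep_numeral)

lemma all_4: "(\<forall>i::4. P i) \<longleftrightarrow> P 0 \<and> P 1 \<and> P 2 \<and> P 3"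
  using index_4_exhaust by metis

lemma ex_4: "(\<exists>i::4. P i) \<longleftrightarrow> P 0 \<or> P 1 \<or> P 2 \<or> P 3"
  using index_4_exhaust by metis

lemma index_4_cases: obtains "(i::4) = 0" | "i = 1" | "i = 2" | "i = 3"
  using index_4_exhaust by blast

lemma sum_UNIV_4: "sum f (UNIV::4 set) = f 0 + f 1 + f 2 + f 3"
  unfolding UNIV_4_from_0 by (simp add: add.assoc)

lemma prod_UNIV_4: "prod f (UNIV::4 set) = f 0 * f 1 * f 2 * f 3"
  unfolding UNIV_4_from_0 by (simp add: mult.assoc)

lemma less_4_iff:
  "(i::4) < j \<longleftrightarrow> (i = 0 \<and> j \<noteq> 0) \<or> (i = 1 \<and> (j = 2 \<or> j = 3)) \<or> (i = 2 \<and> j = 3)"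
  apply (cases i rule: index_4_cases; cases j rule: index_4_cases)
  using less_4_numerals by (auto simp: not_less_iff_gr_or_eq)

section \<open>Matrix units and subspaces\<close>

definition unit_mat :: "4 \<Rightarrow> 4 \<Rightarrow> mat4" where
  "unit_mat a b = (\<chi> r c. if r = a \<and> c = b then 1 else 0)"

definition diag_mat :: "(4 \<Rightarrow> complex) \<Rightarrow> mat4" where
  "diag_mat d = (\<chi> r c. if r = c then d r else 0)"

definition diag_part :: "mat4 \<Rightarrow> mat4" where
  "diag_part z = (\<chi> r c. if r = c then z$r$r else 0)"

lemma unit_mat_nth [simp]: "unit_mat a b $ r $ c = (if r = a \<and> c = b then 1 else 0)"
  by (simp add: unit_mat_def)

lemma diag_mat_nth [simp]: "diag_mat d $ r $ c = (if r = c then d r else 0)"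
  by (simp add: diag_mat_def)

lemma diag_part_nth [simp]: "diag_part z $ r $ c = (if r = c then z$r$r else 0)"
  by (simp add: diag_part_def)

lemma cscale_nth [simp]: "cscale k A $ r $ c = k * A $ r $ c"
  by (simp add: cscale_def)

lemma mat_nth [simp]: "(mat x :: mat4) $ r $ c = (if r = c then x else 0)"
  by (simp add: mat_def)

lemma mat4_eqI: "(\<And>i j. (A::mat4) $ i $ j = B $ i $ j) \<Longrightarrow> A = B"
  by (simp add: vec_eq_iff)

lemma matrix_mul_nth: "(A ** B :: mat4) $ i $ j = (\<Sum>k\<in>UNIV. A$i$k * B$k$j)"
  by (simp add: matrix_matrix_mult_def)

lemma unit_mat_mult_nth [simp]: "(unit_mat a b ** A) $ i $ j = (if i = a then A $ b $ j else 0)"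
  unfolding matrix_matrix_mult_def
  by (cases "i = a") (simp_all add: if_distrib[of "\<lambda>x. x * _"] cong: if_cong)

lemma mult_unit_mat_nth [simp]: "(A ** unit_mat a b) $ i $ j = (if j = b then A $ i $ a else 0)"
  unfolding matrix_matrix_mult_def
  by (cases "j = b") (simp_all add: if_distrib[of "\<lambda>x. _ * x"] cong: if_cong)

lemma diag_mat_mult_nth [simp]: "(diag_mat d ** A) $ i $ j = d i * A $ i $ j"
  unfolding matrix_matrix_mult_def
  by (simp add: if_distrib[of "\<lambda>x. x * _"] cong: if_cong)

lemma mult_diag_mat_nth [simp]: "(A ** diag_mat d) $ i $ j = A $ i $ j * d j"
  unfolding matrix_matrix_mult_def
  by (simp add: if_distrib[of "\<lambda>x. _ * x"] cong: if_cong)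

lemma cscale_zero [simp]: "cscale 0 A = 0"
  by (rule mat4_eqI) simp

lemma matrix_mul_add_left: "((A::'a::semiring_1^'n^'m) + B) ** C = A ** C + B ** C"
  by (simp add: vec_eq_iff matrix_matrix_mult_def sum.distrib distrib_right)

lemma matrix_mul_diff_left: "((A::'a::ring_1^'n^'m) - B) ** C = A ** C - B ** C"
  by (simp add: vec_eq_iff matrix_matrix_mult_def sum_subtractf left_diff_distrib)

lemma matrix_mul_diff_right: "(A::'a::ring_1^'n^'m) ** (B - C) = A ** B - A ** C"
  by (simp add: vec_eq_iff matrix_matrix_mult_def sum_subtractf right_diff_distrib)

lemma matrix_mul_cscale_left: "cscale c A ** B = cscale c (A ** B)"
  by (simp add: vec_eq_iff matrix_matrix_mult_def sum_distrib_left mult.assoc)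

lemma matrix_mul_cscale_right: "A ** cscale c B = cscale c (A ** B)"
  by (simp add: vec_eq_iff matrix_matrix_mult_def sum_distrib_left mult.left_commute)

definition csubspace :: "mat4 set \<Rightarrow> bool" where
  "csubspace W \<longleftrightarrow> 0 \<in> W \<and> (\<forall>x\<in>W. \<forall>y\<in>W. x + y \<in> W) \<and> (\<forall>c. \<forall>x\<in>W. cscale c x \<in> W)"

lemma csubspaceD:
  assumes "csubspace W"
  shows "0 \<in> W" "x \<in> W \<Longrightarrow> y \<in> W \<Longrightarrow> x + y \<in> W" "x \<in> W \<Longrightarrow> cscale c x \<in> W"
  using assms unfolding csubspace_def by auto

lemma csubspace_diff: assumes "csubspace W" "x \<in> W" "y \<in> W" shows "x - y \<in> W"
proof -
  have "x - y = x + cscale (-1) y" by (simp add: vec_eq_iff)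
  then show ?thesis using csubspaceD(2)[OF assms(1,2) csubspaceD(3)[OF assms(1,3), of "-1"]] by (simp only:)
qed

lemma csubspace_sum:
  assumes "csubspace W" "finite A" "\<And>a. a \<in> A \<Longrightarrow> f a \<in> W"
  shows "sum f A \<in> W"
  using assms(2,3) by (induction A rule: finite_induct) (auto intro: csubspaceD[OF assms(1)])

lemma matrix_unit_decomp:
  "z = (\<Sum>p\<in>{p::4\<times>4. fst p \<noteq> snd p}. cscale (z $ fst p $ snd p) (unit_mat (fst p) (snd p)))
       + diag_part z"
proof -
  let ?g = "\<lambda>p::4\<times>4. cscale (z $ fst p $ snd p) (unit_mat (fst p) (snd p))"
  let ?S = "{p::4\<times>4. fst p \<noteq> snd p}"
  have off: "(\<Sum>p\<in>?S. ?g p) $ i $ j = (if i \<noteq> j then z$i$j else 0)" for i j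
  proof -
    have "(\<Sum>p\<in>?S. ?g p) $ i $ j = (\<Sum>p\<in>?S. if p = (i,j) then z$i$j else 0)"
      by (simp only: sum_component) (rule sum.cong, auto)
    also have "\<dots> = (if i \<noteq> j then z$i$j else 0)" by simp
    finally show ?thesis .
  qed
  show ?thesis by (rule mat4_eqI) (simp only: vector_add_component off, simp)
qed

lemma csubspace_memI:
  assumes W: "csubspace W"
    and off: "\<And>i j. i \<noteq> j \<Longrightarrow> z$i$j \<noteq> 0 \<Longrightarrow> unit_mat i j \<in> W"
    and diag: "diag_part z \<in> W"
  shows "z \<in> W"
proof -
  have "cscale (z $ fst p $ snd p) (unit_mat (fst p) (snd p)) \<in> W" if "fst p \<noteq> snd p" for p
    using that off[of "fst p" "snd p"] csubspaceD[OF W] by (cases "z $ fst p $ snd p = 0") auto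
  then have "(\<Sum>p\<in>{p::4\<times>4. fst p \<noteq> snd p}. cscale (z $ fst p $ snd p) (unit_mat (fst p) (snd p))) \<in> W"
    by (intro csubspace_sum[OF W]) auto
  then show ?thesis
    by (subst matrix_unit_decomp) (rule csubspaceD(2)[OF W _ diag])
qed

section \<open>Subspaces stable under the Borel subalgebra\<close>

definition entrywise_scale :: "(4 \<Rightarrow> 4 \<Rightarrow> complex) \<Rightarrow> mat4 \<Rightarrow> mat4" where
  "entrywise_scale lam z = (\<chi> i j. lam i j * z$i$j)"

text \<open>\<open>lam i j\<close> is the eigenvalue of a torus element acting on the matrix unit \<open>E\<^sub>i\<^sub>j\<close>.\<close>

definition separating_weights :: "(4 \<Rightarrow> 4 \<Rightarrow> complex) \<Rightarrow> bool" where
  "separating_weights lam \<longleftrightarrow> (\<forall>i k. lam i i = lam k k)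
     \<and> (\<forall>i j k l. i \<noteq> j \<longrightarrow> (i,j) \<noteq> (k,l) \<longrightarrow> lam i j \<noteq> lam k l)"

lemma separating_weightsD:
  assumes "separating_weights lam"
  shows "lam i i = lam k k" "i \<noteq> j \<Longrightarrow> (i,j) \<noteq> (k,l) \<Longrightarrow> lam i j \<noteq> lam k l"
  using assms unfolding separating_weights_def by blast+

definition borel_stable :: "(4 \<Rightarrow> 4 \<Rightarrow> complex) \<Rightarrow> mat4 set \<Rightarrow> bool" where
  "borel_stable lam W \<longleftrightarrow> csubspace W \<and> (\<forall>a b. a < b \<longrightarrow> (\<forall>z\<in>W. bracket (unit_mat a b) z \<in> W))
     \<and> (\<forall>z\<in>W. entrywise_scale lam z \<in> W)"

lemma borel_stable_csubspace: "borel_stable lam W \<Longrightarrow> csubspace W"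
  by (simp add: borel_stable_def)

lemma borel_stable_bracket: "borel_stable lam W \<Longrightarrow> a < b \<Longrightarrow> z \<in> W \<Longrightarrow> bracket (unit_mat a b) z \<in> W"
  by (simp add: borel_stable_def)

lemma weight_product_in:
  assumes W: "borel_stable lam W" and z: "z \<in> W" and M: "finite M"
  shows "(\<chi> i j. (\<Prod>m\<in>M. lam i j - m) * z$i$j) \<in> W"
  using M
proof (induction M rule: finite_induct)
  case empty
  then show ?case using z by (simp add: vec_eq_iff)
next
  case (insert m M)
  let ?y = "\<chi> i j. (\<Prod>m\<in>M. lam i j - m) * z$i$j"
  have "(\<chi> i j. (\<Prod>m\<in>insert m M. lam i j - m) * z$i$j) = entrywise_scale lam ?y - cscale m ?y"
    using insert(1,2) by (simp add: vec_eq_iff entrywise_scale_def algebra_simps)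
  moreover have "entrywise_scale lam ?y \<in> W" "cscale m ?y \<in> W"
    using insert(3) W csubspaceD(3)[OF borel_stable_csubspace[OF W]] by (auto simp: borel_stable_def)
  ultimately show ?case using csubspace_diff[OF borel_stable_csubspace[OF W]] by simp
qed

text \<open>The operator \<open>\<Prod>\<^sub>m (entrywise_scale lam - m)\<close>, over all weights \<open>m \<noteq> c\<close>, projects onto
  the weight space of \<open>c\<close> up to a nonzero factor.\<close>

lemma weight_component_in:
  assumes W: "borel_stable lam W" and z: "z \<in> W"
  shows "(\<chi> i j. if lam i j = c then z$i$j else 0) \<in> W"
proof -
  define M where "M = (\<lambda>p. lam (fst p) (snd p)) ` {p. lam (fst p) (snd p) \<noteq> c}"
  define P where "P = (\<Prod>m\<in>M. c - m)"
  have fin: "finite M" unfolding M_def by simp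
  have mem: "lam i j \<in> M" if "lam i j \<noteq> c" for i j
    unfolding M_def using that by (intro image_eqI[of _ _ "(i,j)"]) auto
  have "c \<notin> M" unfolding M_def by auto
  then have P: "P \<noteq> 0" unfolding P_def using fin by simp
  have "(\<chi> i j. (\<Prod>m\<in>M. lam i j - m) * z$i$j) = cscale P (\<chi> i j. if lam i j = c then z$i$j else 0)"
  proof (rule mat4_eqI)
    fix i j
    have "(\<Prod>m\<in>M. lam i j - m) = 0" if "lam i j \<noteq> c"
      by (rule prod_zero[OF fin bexI[OF _ mem[OF that]]]) simp
    then show "(\<chi> i j. (\<Prod>m\<in>M. lam i j - m) * z$i$j) $ i $ j
        = cscale P (\<chi> i j. if lam i j = c then z$i$j else 0) $ i $ j"
      by (cases "lam i j = c") (simp_all add: P_def)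
  qed
  then have "cscale (1/P) (\<chi> i j. (\<Prod>m\<in>M. lam i j - m) * z$i$j)
      = (\<chi> i j. if lam i j = c then z$i$j else 0)"
    using P by (simp add: vec_eq_iff)
  moreover have "cscale (1/P) (\<chi> i j. (\<Prod>m\<in>M. lam i j - m) * z$i$j) \<in> W"
    using csubspaceD(3)[OF borel_stable_csubspace[OF W] weight_product_in[OF W z fin]] .
  ultimately show ?thesis by simp
qed

lemma unit_mat_in_borel_stable:
  assumes W: "borel_stable lam W" and lam: "separating_weights lam" and z: "z \<in> W"
    and pq: "p \<noteq> q" and nz: "z$p$q \<noteq> 0"
  shows "unit_mat p q \<in> W"
proof -
  have "(\<chi> i j. if lam i j = lam p q then z$i$j else 0) = cscale (z$p$q) (unit_mat p q)"
  proof (rule mat4_eqI)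
    fix i j
    show "(\<chi> i j. if lam i j = lam p q then z$i$j else 0) $ i $ j = cscale (z$p$q) (unit_mat p q) $ i $ j"
      using separating_weightsD(2)[OF lam pq, of i j] by auto
  qed
  then have "cscale (z$p$q) (unit_mat p q) \<in> W" using weight_component_in[OF W z, of "lam p q"] by simp
  then have "cscale (1 / z$p$q) (cscale (z$p$q) (unit_mat p q)) \<in> W"
    using csubspaceD(3)[OF borel_stable_csubspace[OF W]] by blast
  moreover have "cscale (1 / z$p$q) (cscale (z$p$q) (unit_mat p q)) = unit_mat p q"
    using nz by (intro mat4_eqI) simp
  ultimately show ?thesis by (simp only:)
qed

lemma diag_part_in_borel_stable:
  assumes W: "borel_stable lam W" and lam: "separating_weights lam" and z: "z \<in> W"
  shows "diag_part z \<in> W"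
proof -
  have "lam i j = lam 0 0 \<longleftrightarrow> i = j" for i j
    using separating_weightsD(1)[OF lam, of i 0] separating_weightsD(2)[OF lam, of i j 0 0] by auto
  then have "(\<chi> i j. if lam i j = lam 0 0 then z$i$j else 0) = diag_part z"
    by (intro mat4_eqI) simp
  then show ?thesis using weight_component_in[OF W z, of "lam 0 0"] by simp
qed

lemma bracket_unit_mat_diag:
  assumes "\<And>i j. i \<noteq> j \<Longrightarrow> d$i$j = 0"
  shows "bracket (unit_mat a b) d = cscale (d$b$b - d$a$a) (unit_mat a b)"
proof (rule mat4_eqI)
  fix i j
  show "bracket (unit_mat a b) d $ i $ j = cscale (d$b$b - d$a$a) (unit_mat a b) $ i $ j"
    using assms[of b j] assms[of i a] by (cases "i = a"; cases "j = b") (auto simp: bracket_def)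
qed

lemma borel_stable_unit_of_diag:
  assumes W: "borel_stable lam W" and d: "d \<in> W" "\<And>i j. i \<noteq> j \<Longrightarrow> d$i$j = 0"
    and ab: "a < b" and ne: "d$a$a \<noteq> d$b$b"
  shows "unit_mat a b \<in> W"
proof -
  have "cscale (1/(d$b$b - d$a$a)) (bracket (unit_mat a b) d) \<in> W"
    using borel_stable_bracket[OF W ab d(1)] csubspaceD(3)[OF borel_stable_csubspace[OF W]] by blast
  moreover have "cscale (1/(d$b$b - d$a$a)) (bracket (unit_mat a b) d) = unit_mat a b"
    using ne by (simp add: bracket_unit_mat_diag[OF d(2)] vec_eq_iff)
  ultimately show ?thesis by simp
qed

lemma borel_stable_unit_right:
  assumes W: "borel_stable lam W" and E: "unit_mat k l \<in> W" and "l < b" "b \<noteq> k"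
  shows "unit_mat k b \<in> W"
proof -
  have "cscale (-1) (bracket (unit_mat l b) (unit_mat k l)) = unit_mat k b"
    using assms(4) by (intro mat4_eqI) (simp add: bracket_def)
  then show ?thesis
    using csubspaceD(3)[OF borel_stable_csubspace[OF W] borel_stable_bracket[OF W assms(3) E], of "-1"]
    by simp
qed

lemma borel_stable_unit_up:
  assumes W: "borel_stable lam W" and E: "unit_mat k l \<in> W" and "a < k" "a \<noteq> l"
  shows "unit_mat a l \<in> W"
proof -
  have "bracket (unit_mat a k) (unit_mat k l) = unit_mat a l"
    using assms(3,4) by (intro mat4_eqI) (simp add: bracket_def)
  then show ?thesis using borel_stable_bracket[OF W assms(3) E] by simp
qed

lemma borel_stable_diag_of_lower:
  assumes W: "borel_stable lam W" and E: "unit_mat k l \<in> W" and lk: "l < k"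
  shows "unit_mat l l - unit_mat k k \<in> W"
proof -
  have "bracket (unit_mat l k) (unit_mat k l) = unit_mat l l - unit_mat k k"
    using lk by (intro mat4_eqI) (simp add: bracket_def)
  then show ?thesis using borel_stable_bracket[OF W lk E] by simp
qed

lemma borel_stable_unit_of_lower:
  assumes W: "borel_stable lam W" and E: "unit_mat k l \<in> W" and "l < k" "l < b"
  shows "unit_mat l b \<in> W"
proof -
  have "(unit_mat l l - unit_mat k k) $ l $ l \<noteq> (unit_mat l l - unit_mat k k) $ b $ b"
    using assms(3,4) by auto
  moreover have "\<And>i j. i \<noteq> j \<Longrightarrow> (unit_mat l l - unit_mat k k) $ i $ j = 0"
    by auto
  ultimately show ?thesis
    using borel_stable_unit_of_diag[OF W borel_stable_diag_of_lower[OF W E assms(3)] _ assms(4)] by blast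
qed

definition northeast :: "4 \<Rightarrow> 4 \<Rightarrow> 4 \<Rightarrow> 4 \<Rightarrow> bool" where
  "northeast p q k l \<longleftrightarrow> k \<noteq> l \<and> p \<noteq> q \<and> p \<le> k \<and> l \<le> q"

lemma borel_stable_northeast:
  assumes W: "borel_stable lam W" and E: "unit_mat i j \<in> W" and ne: "northeast a b i j"
  shows "unit_mat a b \<in> W"
proof (cases "a = i")
  case True
  then show ?thesis
    using ne borel_stable_unit_right[OF W E, of b] E by (cases "b = j") (auto simp: northeast_def le_less)
next
  case False
  then have ai: "a < i" using ne by (simp add: northeast_def le_less)
  show ?thesis
  proof (cases "b = j")
    case True
    then show ?thesis using borel_stable_unit_up[OF W E ai] ne by (simp add: northeast_def)
  next
    case False
    then have jb: "j < b" using ne by (simp add: northeast_def le_less)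
    show ?thesis
    proof (cases "a = j")
      case True
      then show ?thesis using borel_stable_unit_of_lower[OF W E _ jb] ai by simp
    next
      case False
      have "b \<noteq> a" using ne by (auto simp: northeast_def)
      then show ?thesis using borel_stable_unit_right[OF W borel_stable_unit_up[OF W E ai False] jb] by blast
    qed
  qed
qed

section \<open>Inverses and the Borel subgroup\<close>

lemma matrix_inv_eqI:
  fixes A :: "'a::field^'n^'n" assumes "A ** B = mat 1" shows "matrix_inv A = B"
proof -
  have BA: "B ** A = mat 1" using assms matrix_left_right_inverse by blast
  have "A ** matrix_inv A = mat 1 \<and> matrix_inv A ** A = mat 1"
    unfolding matrix_inv_def by (rule someI_ex) (use assms BA in blast)
  then have "matrix_inv A = matrix_inv A ** (A ** B)" using assms by simp
  also have "\<dots> = B" using \<open>A ** matrix_inv A = mat 1 \<and> matrix_inv A ** A = mat 1\<close>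
    by (simp add: matrix_mul_assoc)
  finally show ?thesis .
qed

lemma matrix_inv_right:
  fixes A :: "'a::field^'n^'n" assumes "det A \<noteq> 0" shows "A ** matrix_inv A = mat 1"
proof -
  obtain B where B: "A ** B = mat 1" using assms invertible_det_nz unfolding invertible_def by blast
  then have "matrix_inv A = B" by (rule matrix_inv_eqI)
  then show ?thesis using B by simp
qed

lemma matrix_inv_mult:
  fixes A B :: "'a::field^'n^'n" assumes "det A \<noteq> 0" "det B \<noteq> 0"
  shows "matrix_inv (A ** B) = matrix_inv B ** matrix_inv A"
proof (rule matrix_inv_eqI)
  have "A ** B ** (matrix_inv B ** matrix_inv A) = A ** (B ** matrix_inv B) ** matrix_inv A"
    by (simp add: matrix_mul_assoc)
  then show "A ** B ** (matrix_inv B ** matrix_inv A) = mat 1"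
    using matrix_inv_right[OF assms(1)] matrix_inv_right[OF assms(2)] by simp
qed

lemma upper_triD: "upper_tri A \<Longrightarrow> j < i \<Longrightarrow> A $ i $ j = 0"
  unfolding upper_tri_def by blast

lemma upper_tri_mult: assumes "upper_tri A" "upper_tri B" shows "upper_tri (A ** B)"
  unfolding upper_tri_def
proof (intro allI impI)
  fix i j :: 4 assume ji: "j < i"
  have "A $ i $ k * B $ k $ j = 0" for k
    using upper_triD[OF assms(1), of k i] upper_triD[OF assms(2), of j k] ji
    by (cases "k < i") auto
  then show "(A ** B) $ i $ j = 0" unfolding matrix_mul_nth by (intro sum.neutral) blast
qed

lemma det_upper_tri: "upper_tri (A::mat4) \<Longrightarrow> det A = A$0$0 * A$1$1 * A$2$2 * A$3$3"
  using det_upperdiagonal[of A] upper_triD[of A] by (simp add: prod_UNIV_4)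

lemma upper_tri_in_Borel: "upper_tri b \<Longrightarrow> b$0$0 * b$1$1 * b$2$2 * b$3$3 = 1 \<Longrightarrow> b \<in> Borel"
  unfolding Borel_def SL4_def by (simp add: det_upper_tri)

lemma Borel_mult: "b1 \<in> Borel \<Longrightarrow> b2 \<in> Borel \<Longrightarrow> b1 ** b2 \<in> Borel"
  unfolding Borel_def SL4_def by (auto simp: det_mul upper_tri_mult)

lemma Borel_one: "mat 1 \<in> Borel"
  unfolding Borel_def SL4_def upper_tri_def by auto

lemma Borel_det: "b \<in> Borel \<Longrightarrow> det b = 1"
  unfolding Borel_def SL4_def by auto

lemma Borel_diag_nonzero: assumes "b \<in> Borel" shows "b $ i $ i \<noteq> 0"
proof -
  have "b$0$0 * b$1$1 * b$2$2 * b$3$3 = 1"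
    using assms det_upper_tri[of b] unfolding Borel_def SL4_def by auto
  then show ?thesis by (cases i rule: index_4_cases) auto
qed

lemma SL4_mult: "a \<in> SL4 \<Longrightarrow> b \<in> SL4 \<Longrightarrow> a ** b \<in> SL4"
  unfolding SL4_def by (simp add: det_mul)

lemma Borel_SL4: "b \<in> Borel \<Longrightarrow> b \<in> SL4"
  unfolding Borel_def by simp

text \<open>Column \<open>j\<close> of the unipotent part of \<open>b\<close>, so that
  \<open>b = diag(b) (1 + N\<^sub>3) (1 + N\<^sub>2) (1 + N\<^sub>1)\<close> with \<open>N\<^sub>j\<^sup>2 = 0\<close>.\<close>

definition unipotent_column :: "mat4 \<Rightarrow> 4 \<Rightarrow> mat4" where
  "unipotent_column b j = (\<chi> r c. if c = j \<and> r < j then b$r$c / b$r$r else 0)"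

lemma unipotent_column_nth [simp]:
  "unipotent_column b j $ r $ c = (if c = j \<and> r < j then b$r$c / b$r$r else 0)"
  by (simp add: unipotent_column_def)

lemma unipotent_column_mult: assumes "\<not> a < c" shows "unipotent_column b a ** unipotent_column b c = 0"
proof (rule mat4_eqI)
  fix r s :: 4
  have "unipotent_column b a $ r $ m * unipotent_column b c $ m $ s = 0" for m
    using assms by auto
  then show "(unipotent_column b a ** unipotent_column b c) $ r $ s = 0 $ r $ s"
    unfolding matrix_mul_nth zero_index by (intro sum.neutral) blast
qed

lemma square_zero_inverse:
  fixes N :: "'a::ring_1^'n^'n" assumes "N ** N = 0" shows "(mat 1 - N) ** (mat 1 + N) = mat 1"
  using assms by (simp add: matrix_mul_diff_left matrix_add_ldistrib)

lemma Borel_decomp: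
  assumes b: "b \<in> Borel"
  shows "b = diag_mat (\<lambda>i. b$i$i) ** ((mat 1 + unipotent_column b 3) ** (mat 1 + unipotent_column b 2)
               ** (mat 1 + unipotent_column b 1))"
proof -
  have up: "upper_tri b" using b unfolding Borel_def by simp
  have prod: "(mat 1 + unipotent_column b 3) ** (mat 1 + unipotent_column b 2) ** (mat 1 + unipotent_column b 1)
      = mat 1 + unipotent_column b 1 + unipotent_column b 2 + unipotent_column b 3"
    using unipotent_column_mult[of 3 2 b] unipotent_column_mult[of 3 1 b]
      unipotent_column_mult[of 2 1 b] less_4_numerals
    by (simp add: matrix_mul_add_left matrix_add_ldistrib matrix_mul_assoc[symmetric] algebra_simps)
  have "b = diag_mat (\<lambda>i. b$i$i)
      ** (mat 1 + unipotent_column b 1 + unipotent_column b 2 + unipotent_column b 3)"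
  proof (rule mat4_eqI)
    fix r c :: 4
    show "b $ r $ c = (diag_mat (\<lambda>i. b $ i $ i)
        ** (mat 1 + unipotent_column b 1 + unipotent_column b 2 + unipotent_column b 3)) $ r $ c"
      using Borel_diag_nonzero[OF b, of r] upper_triD[OF up, of c r] less_4_numerals
      by (cases r rule: index_4_cases; cases c rule: index_4_cases) (simp_all add: less_4_iff)
  qed
  then show ?thesis unfolding prod .
qed

lemma Borel_inverse:
  assumes b: "b \<in> Borel"
  shows "matrix_inv b = (mat 1 - unipotent_column b 1) ** (mat 1 - unipotent_column b 2)
           ** (mat 1 - unipotent_column b 3) ** diag_mat (\<lambda>i. 1 / b$i$i)"
proof (rule matrix_inv_eqI)
  let ?D = "diag_mat (\<lambda>i. b$i$i)" and ?D' = "diag_mat (\<lambda>i. 1 / b$i$i)"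
  let ?A = "\<lambda>j. mat 1 - unipotent_column b j" and ?B = "\<lambda>j. mat 1 + unipotent_column b j"
  have DD: "X ** ?D' ** ?D = X" for X :: mat4
  proof -
    have "?D' ** ?D = mat 1" by (rule mat4_eqI) (simp add: Borel_diag_nonzero[OF b])
    then show ?thesis by (simp add: matrix_mul_assoc[symmetric])
  qed
  have AB: "X ** ?A j ** ?B j = X" for X :: mat4 and j
    using square_zero_inverse[OF unipotent_column_mult[of j j b]]
    by (simp add: matrix_mul_assoc[symmetric])
  have "(?A 1 ** ?A 2 ** ?A 3 ** ?D') ** b
      = (?A 1 ** ?A 2 ** ?A 3 ** ?D') ** (?D ** (?B 3 ** ?B 2 ** ?B 1))"
    by (rule arg_cong[where f = "(**) (?A 1 ** ?A 2 ** ?A 3 ** ?D')", OF Borel_decomp[OF b]])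
  also have "\<dots> = ?A 1 ** ?A 2 ** ?A 3 ** ?D' ** ?D ** ?B 3 ** ?B 2 ** ?B 1"
    by (simp only: matrix_mul_assoc)
  also have "\<dots> = mat 1"
    using square_zero_inverse[OF unipotent_column_mult[of 1 1 b]] by (simp only: DD AB)
  finally show "b ** (?A 1 ** ?A 2 ** ?A 3 ** ?D') = mat 1"
    using matrix_left_right_inverse by blast
qed

section \<open>Hessenberg spaces are \<open>Ad(B)\<close>-stable\<close>

text \<open>Entries with sum \<open>0\<close> whose pairwise differences are distinct and \<open>\<noteq> 0\<close>.\<close>

definition hess_torus :: "4 \<Rightarrow> complex" where
  "hess_torus i = (if i = 0 then -11 else if i = 1 then -7 else if i = 2 then 1 else 17)"

definition hess_weights :: "4 \<Rightarrow> 4 \<Rightarrow> complex" where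
  "hess_weights i j = hess_torus i - hess_torus j"

lemma separating_hess_weights: "separating_weights hess_weights"
  unfolding separating_weights_def hess_weights_def hess_torus_def by (simp only: all_4) simp

lemma trace_mat4: "trace (A::mat4) = A$0$0 + A$1$1 + A$2$2 + A$3$3"
  by (simp add: trace_def sum_UNIV_4)

lemma unit_mat_borel_alg: "a < b \<Longrightarrow> unit_mat a b \<in> borel_alg"
  unfolding borel_alg_def sl4_def upper_tri_def by (auto simp: trace_mat4)

lemma hessenberg_csubspace: "hessenberg_space H \<Longrightarrow> csubspace H"
  unfolding hessenberg_space_def csubspace_sl4_def csubspace_def by auto

lemma hessenberg_bracket: "hessenberg_space H \<Longrightarrow> y \<in> borel_alg \<Longrightarrow> h \<in> H \<Longrightarrow> bracket y h \<in> H"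
  unfolding hessenberg_space_def by blast

lemma hessenberg_borel_stable: assumes H: "hessenberg_space H" shows "borel_stable hess_weights H"
  unfolding borel_stable_def
proof (intro conjI allI impI ballI)
  show "csubspace H" using hessenberg_csubspace[OF H] .
  fix a b :: 4 and z assume "a < b" "z \<in> H"
  then show "bracket (unit_mat a b) z \<in> H" using hessenberg_bracket[OF H unit_mat_borel_alg] by blast
next
  fix z assume z: "z \<in> H"
  have "diag_mat hess_torus \<in> borel_alg"
    unfolding borel_alg_def sl4_def upper_tri_def by (simp add: trace_mat4 hess_torus_def)
  moreover have "entrywise_scale hess_weights z = bracket (diag_mat hess_torus) z"
    by (rule mat4_eqI) (simp add: entrywise_scale_def hess_weights_def bracket_def algebra_simps)
  ultimately show "entrywise_scale hess_weights z \<in> H" using hessenberg_bracket[OF H _ z] by simp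
qed

lemma conj_square_zero:
  assumes NN: "N ** N = (0::mat4)"
  shows "(mat 1 - N) ** y ** (mat 1 + N) = y - bracket N y + cscale (1/2) (bracket N (bracket N y))"
proof -
  have e1: "N ** (N ** y) = 0" using NN by (simp add: matrix_mul_assoc)
  have e2: "(y ** N) ** N = 0" using NN by (simp add: matrix_mul_assoc[symmetric])
  have e3: "N ** (y ** N) = (N ** y) ** N" by (simp add: matrix_mul_assoc)
  have L: "(mat 1 - N) ** y ** (mat 1 + N) = y - N ** y + (y ** N - (N ** y) ** N)"
    by (simp add: matrix_mul_diff_left matrix_add_ldistrib)
  have R: "bracket N (bracket N y) = (0 - (N ** y) ** N) - ((N ** y) ** N - 0)"
    unfolding bracket_def by (simp only: matrix_mul_diff_right matrix_mul_diff_left e1 e2 e3)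
  show ?thesis unfolding L R by (rule mat4_eqI) (simp add: bracket_def algebra_simps)
qed

lemma hessenberg_conj_square_zero:
  assumes H: "hessenberg_space H" and y: "y \<in> H" and N: "N \<in> borel_alg" "N ** N = 0"
  shows "(mat 1 - N) ** y ** (mat 1 + N) \<in> H"
proof -
  have W: "csubspace H" using hessenberg_csubspace[OF H] .
  have b1: "bracket N y \<in> H" using hessenberg_bracket[OF H N(1) y] .
  have b2: "bracket N (bracket N y) \<in> H" using hessenberg_bracket[OF H N(1) b1] .
  have "y - bracket N y + cscale (1/2) (bracket N (bracket N y)) \<in> H"
    using y b1 b2 by (intro csubspaceD(2)[OF W] csubspace_diff[OF W] csubspaceD(3)[OF W])
  then show ?thesis using conj_square_zero[OF N(2)] by simp
qed

lemma hessenberg_conj_diag: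
  assumes H: "hessenberg_space H" and y: "y \<in> H" and d: "\<And>i. d i \<noteq> 0"
  shows "diag_mat (\<lambda>i. 1 / d i) ** y ** diag_mat d \<in> H"
proof -
  have W: "borel_stable hess_weights H" using hessenberg_borel_stable[OF H] .
  let ?M = "diag_mat (\<lambda>i. 1 / d i) ** y ** diag_mat d"
  show ?thesis
  proof (rule csubspace_memI[OF borel_stable_csubspace[OF W]])
    fix i j assume "i \<noteq> j" "?M $ i $ j \<noteq> 0"
    then show "unit_mat i j \<in> H"
      using unit_mat_in_borel_stable[OF W separating_hess_weights y] by auto
  next
    have "diag_part ?M = diag_part y" by (rule mat4_eqI) (simp add: d)
    then show "diag_part ?M \<in> H"
      using diag_part_in_borel_stable[OF W separating_hess_weights y] by simp
  qed
qed

lemma unipotent_column_borel_alg: "unipotent_column b j \<in> borel_alg"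
  unfolding borel_alg_def sl4_def upper_tri_def by (auto simp: trace_mat4)

lemma hessenberg_conj_Borel:
  assumes H: "hessenberg_space H" and y: "y \<in> H" and b: "b \<in> Borel"
  shows "matrix_inv b ** y ** b \<in> H"
proof -
  let ?D = "diag_mat (\<lambda>i. b$i$i)" and ?D' = "diag_mat (\<lambda>i. 1 / b$i$i)"
  let ?A = "\<lambda>j. mat 1 - unipotent_column b j" and ?B = "\<lambda>j. mat 1 + unipotent_column b j"
  have step: "?A j ** z ** ?B j \<in> H" if "z \<in> H" for j z
    using hessenberg_conj_square_zero[OF H that unipotent_column_borel_alg]
      unipotent_column_mult[of j j b] by simp
  have "matrix_inv b ** y ** b = (?A 1 ** ?A 2 ** ?A 3 ** ?D') ** y ** (?D ** (?B 3 ** ?B 2 ** ?B 1))"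
    unfolding Borel_inverse[OF b]
    by (rule arg_cong[where f = "(**) (?A 1 ** ?A 2 ** ?A 3 ** ?D' ** y)", OF Borel_decomp[OF b]])
  also have "\<dots> = ?A 1 ** (?A 2 ** (?A 3 ** (?D' ** y ** ?D) ** ?B 3) ** ?B 2) ** ?B 1"
    by (simp only: matrix_mul_assoc)
  finally show ?thesis
    using step hessenberg_conj_diag[OF H y, of "\<lambda>i. b$i$i"] Borel_diag_nonzero[OF b] by simp
qed

section \<open>Conjugation by permutation matrices\<close>

definition perm_conj :: "(4 \<Rightarrow> 4) \<Rightarrow> mat4 \<Rightarrow> mat4" where
  "perm_conj p z = (\<chi> i j. z $ p i $ p j)"

lemma perm_conj_nth [simp]: "perm_conj p z $ i $ j = z $ p i $ p j"
  by (simp add: perm_conj_def)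

lemma perm_mat_nth [simp]: "perm_mat p $ r $ c = (if r = p c then 1 else 0)"
  by (simp add: perm_mat_def)

lemma transpose_perm_mat_mult_nth: "(transpose (perm_mat p) ** A) $ i $ j = A $ p i $ j"
  unfolding matrix_matrix_mult_def transpose_def
  by (simp add: if_distrib[of "\<lambda>x. x * _"] cong: if_cong)

lemma mult_perm_mat_nth: "(A ** perm_mat p) $ i $ j = A $ i $ p j"
  unfolding matrix_matrix_mult_def by (simp add: if_distrib[of "\<lambda>x. _ * x"] cong: if_cong)

lemma perm_mat_mult_transpose: assumes "bij p" shows "perm_mat p ** transpose (perm_mat p) = mat 1"
proof (rule mat4_eqI)
  fix i j :: 4
  have "(perm_mat p ** transpose (perm_mat p)) $ i $ j
      = (\<Sum>k\<in>UNIV. if k = inv p i then (if j = i then 1 else 0) else 0)"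
    unfolding matrix_mul_nth by (rule sum.cong) (auto simp: transpose_def bij_inv_eq_iff[OF assms])
  then show "(perm_mat p ** transpose (perm_mat p)) $ i $ j = mat 1 $ i $ j" by simp
qed

lemma det_cscale: "det (cscale c (A::mat4)) = c ^ 4 * det A"
proof -
  have "cscale c A = (\<chi> i. (\<lambda>_. c) i *s A $ i)" by (simp add: vec_eq_iff cscale_def)
  then have "det (cscale c A) = prod (\<lambda>_. c) (UNIV::4 set) * det (\<chi> i. A $ i)"
    using det_rows_mul[of "\<lambda>_. c" "\<lambda>i. A $ i"] by simp
  then show ?thesis by (simp add: prod_UNIV_4 power4_eq_xxxx mult.assoc)
qed

lemma csqrt_csqrt_power4: "csqrt (csqrt z) ^ 4 = z"
proof -
  have "csqrt (csqrt z) ^ 4 = (csqrt (csqrt z) ^ 2) ^ 2" by (subst power_mult[symmetric]) simp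
  also have "\<dots> = z" by (simp only: power2_csqrt)
  finally show ?thesis .
qed

lemma scaled_perm_mat_in_SL4: assumes "bij p" shows "\<exists>c. c \<noteq> 0 \<and> cscale c (perm_mat p) \<in> SL4"
proof -
  have "det (perm_mat p) * det (transpose (perm_mat p)) = 1"
    using perm_mat_mult_transpose[OF assms] det_mul[of "perm_mat p" "transpose (perm_mat p)"] by simp
  then have nz: "det (perm_mat p) \<noteq> 0" by auto
  let ?c = "csqrt (csqrt (1 / det (perm_mat p)))"
  have "det (cscale ?c (perm_mat p)) = 1"
    using nz by (simp only: det_cscale csqrt_csqrt_power4) simp
  moreover from this have "?c \<noteq> 0" by (auto simp: det_cscale)
  ultimately show ?thesis unfolding SL4_def by blast
qed

lemma wdot_scaled_perm_mat:
  assumes "bij p" shows "\<exists>c. c \<noteq> 0 \<and> wdot p = cscale c (perm_mat p) \<and> wdot p \<in> SL4"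
proof -
  define c where "c = (SOME c. cscale c (perm_mat p) \<in> SL4)"
  have c: "cscale c (perm_mat p) \<in> SL4"
    unfolding c_def by (rule someI_ex) (use scaled_perm_mat_in_SL4[OF assms] in blast)
  then have "c \<noteq> 0" unfolding SL4_def by (auto simp: det_cscale)
  then show ?thesis using c unfolding wdot_def c_def[symmetric] by blast
qed

lemma conj_scaled_perm_mat:
  assumes "bij p" "c \<noteq> 0"
  shows "matrix_inv (cscale c (perm_mat p)) ** z ** cscale c (perm_mat p) = perm_conj p z"
proof -
  have "cscale c (perm_mat p) ** cscale (1/c) (transpose (perm_mat p)) = mat 1"
    using perm_mat_mult_transpose[OF assms(1)] assms(2)
    by (simp add: matrix_mul_cscale_left matrix_mul_cscale_right vec_eq_iff)
  then have "matrix_inv (cscale c (perm_mat p)) = cscale (1/c) (transpose (perm_mat p))"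
    by (rule matrix_inv_eqI)
  then show ?thesis
    using assms(2)
    by (intro mat4_eqI) (simp add: matrix_mul_cscale_left matrix_mul_cscale_right
        mult_perm_mat_nth transpose_perm_mat_mult_nth)
qed

lemma perm_conj_unit_mat: "bij p \<Longrightarrow> perm_conj p (unit_mat k l) = unit_mat (inv p k) (inv p l)"
  by (rule mat4_eqI) (auto simp: bij_inv_eq_iff)

section \<open>The largest \<open>Ad(B)\<close>-stable subspace carried into \<open>H\<close> by \<open>v\<close>\<close>

definition stable_core :: "(4 \<Rightarrow> 4) \<Rightarrow> mat4 set \<Rightarrow> mat4 set" where
  "stable_core v H = {z. \<forall>b\<in>Borel. perm_conj v (matrix_inv b ** z ** b) \<in> H}"

lemma stable_core_csubspace: assumes W: "csubspace H" shows "csubspace (stable_core v H)"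
proof -
  have "perm_conj v (x + y) = perm_conj v x + perm_conj v y" for x y by (rule mat4_eqI) simp
  moreover have "perm_conj v (cscale c x) = cscale c (perm_conj v x)" for c x by (rule mat4_eqI) simp
  moreover have "perm_conj v 0 = 0" by (rule mat4_eqI) simp
  ultimately show ?thesis
    using csubspaceD[OF W] unfolding csubspace_def stable_core_def
    by (simp add: matrix_mul_add_left matrix_add_ldistrib matrix_mul_cscale_left
        matrix_mul_cscale_right)
qed

lemma stable_core_conj_Borel:
  assumes z: "z \<in> stable_core v H" and b0: "b0 \<in> Borel"
  shows "matrix_inv b0 ** z ** b0 \<in> stable_core v H"
  unfolding stable_core_def
proof (clarsimp)
  fix b assume b: "b \<in> Borel"
  have "matrix_inv b ** (matrix_inv b0 ** z ** b0) ** b = matrix_inv (b0 ** b) ** z ** (b0 ** b)"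
    using matrix_inv_mult[of b0 b] Borel_det[OF b0] Borel_det[OF b] by (simp add: matrix_mul_assoc)
  then show "perm_conj v (matrix_inv b ** (matrix_inv b0 ** z ** b0) ** b) \<in> H"
    using z Borel_mult[OF b0 b] unfolding stable_core_def by simp
qed

lemma stable_core_bracket:
  assumes W: "csubspace H" and z: "z \<in> stable_core v H" and ab: "a < b"
  shows "bracket (unit_mat a b) z \<in> stable_core v H"
proof -
  let ?E = "unit_mat a b"
  have unip: "mat 1 + cscale t ?E \<in> Borel" for t
    using ab by (intro upper_tri_in_Borel) (auto simp: upper_tri_def)
  have "?E ** ?E = 0" using ab by (intro mat4_eqI) auto
  then have inv: "matrix_inv (mat 1 + cscale t ?E) = mat 1 + cscale (-t) ?E" for t
    by (intro matrix_inv_eqI) (simp add: matrix_mul_add_left matrix_add_ldistrib matrix_mul_cscale_left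
        matrix_mul_cscale_right vec_eq_iff algebra_simps)
  have "bracket ?E z = cscale (1/2) (matrix_inv (mat 1 + cscale (-1) ?E) ** z ** (mat 1 + cscale (-1) ?E)
                       - matrix_inv (mat 1 + cscale 1 ?E) ** z ** (mat 1 + cscale 1 ?E))"
    unfolding inv
    by (rule mat4_eqI) (simp add: matrix_mul_add_left matrix_add_ldistrib matrix_mul_cscale_left
        matrix_mul_cscale_right bracket_def algebra_simps)
  then show ?thesis
    using stable_core_conj_Borel[OF z unip] stable_core_csubspace[OF W]
    by (simp add: csubspace_diff csubspaceD(3))
qed

text \<open>Entries with product \<open>1\<close> whose pairwise ratios are distinct and \<open>\<noteq> 1\<close>.\<close>

definition core_torus :: "4 \<Rightarrow> complex" where
  "core_torus i = (if i = 0 then 1 else if i = 1 then 2 else if i = 2 then 3 else 1/6)"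

definition core_weights :: "4 \<Rightarrow> 4 \<Rightarrow> complex" where
  "core_weights i j = core_torus j / core_torus i"

lemma core_torus_nonzero: "core_torus i \<noteq> 0"
  by (simp add: core_torus_def)

lemma separating_core_weights: "separating_weights core_weights"
proof -
  have "core_weights i j = core_weights k l \<longleftrightarrow> core_torus j * core_torus k = core_torus l * core_torus i"
    for i j k l
    using core_torus_nonzero by (simp add: core_weights_def field_simps)
  moreover have "\<forall>i j k l. i \<noteq> j \<longrightarrow> (i,j) \<noteq> (k,l)
      \<longrightarrow> core_torus j * core_torus k \<noteq> core_torus l * core_torus i"
    unfolding core_torus_def by (simp only: all_4) simp
  ultimately show ?thesis unfolding separating_weights_def by (auto simp: mult.commute)
qed

lemma stable_core_borel_stable:
  assumes W: "csubspace H" shows "borel_stable core_weights (stable_core v H)"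
proof -
  have D: "diag_mat core_torus \<in> Borel"
    by (intro upper_tri_in_Borel) (auto simp: upper_tri_def core_torus_def)
  have "matrix_inv (diag_mat core_torus) = diag_mat (\<lambda>i. 1 / core_torus i)"
    by (intro matrix_inv_eqI mat4_eqI) (simp add: core_torus_nonzero)
  then have "entrywise_scale core_weights z = matrix_inv (diag_mat core_torus) ** z ** diag_mat core_torus"
    for z
    by (intro mat4_eqI) (simp add: entrywise_scale_def core_weights_def)
  then show ?thesis
    unfolding borel_stable_def
    using stable_core_csubspace[OF W] stable_core_bracket[OF W] stable_core_conj_Borel[OF _ D] by auto
qed

lemma stable_core_perm_conj:
  assumes "z \<in> stable_core v H" shows "perm_conj v z \<in> H"
proof -
  have "perm_conj v (matrix_inv (mat 1) ** z ** mat 1) \<in> H"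
    using assms Borel_one unfolding stable_core_def by blast
  moreover have "matrix_inv (mat 1 :: mat4) = mat 1" by (rule matrix_inv_eqI) simp
  ultimately show ?thesis by simp
qed

section \<open>The flag variety and closed \<open>B\<close>-bi-invariant conditions\<close>

lemma openin_flag_top:
  "openin flag_top U \<longleftrightarrow> U \<subseteq> flag \<and> openin (top_of_set SL4) {g \<in> SL4. coset g \<in> U}"
proof -
  let ?L = "\<lambda>U. U \<subseteq> flag \<and> openin (top_of_set SL4) {g \<in> SL4. coset g \<in> U}"
  have "?L (S \<inter> T)" if "?L S" "?L T" for S T
  proof -
    have "{g \<in> SL4. coset g \<in> S \<inter> T} = {g \<in> SL4. coset g \<in> S} \<inter> {g \<in> SL4. coset g \<in> T}"
      by blast
    then show ?thesis using that by auto
  qed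
  moreover have "?L (\<Union>K)" if "\<forall>S\<in>K. ?L S" for K
  proof -
    have "{g \<in> SL4. coset g \<in> \<Union>K} = \<Union>((\<lambda>S. {g \<in> SL4. coset g \<in> S}) ` K)" by blast
    then show ?thesis using that by auto
  qed
  ultimately have "istopology ?L" unfolding istopology_def by blast
  then show ?thesis unfolding flag_top_def by simp
qed

lemma coset_in_flag: "g \<in> SL4 \<Longrightarrow> coset g \<in> flag"
  unfolding flag_def by blast

lemma topspace_flag_top: "topspace flag_top = flag"
proof
  show "topspace flag_top \<subseteq> flag" unfolding topspace_def using openin_flag_top by blast
  have "{g \<in> SL4. coset g \<in> flag} = SL4" using coset_in_flag by blast
  then have "openin flag_top flag" unfolding openin_flag_top by simp
  then show "flag \<subseteq> topspace flag_top" by (rule openin_subset)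
qed

lemma coset_eqD: "coset g = coset g' \<Longrightarrow> \<exists>b\<in>Borel. g = g' ** b"
proof -
  assume "coset g = coset g'"
  moreover have "g \<in> coset g"
    unfolding coset_def using Borel_one matrix_mul_rid[of g, symmetric] by blast
  ultimately show ?thesis unfolding coset_def by auto
qed

definition flag_locus :: "(mat4 \<Rightarrow> bool) \<Rightarrow> mat4 set set" where
  "flag_locus P = {coset g | g. g \<in> SL4 \<and> P g}"

lemma coset_in_flag_locus_iff:
  assumes right: "\<And>g b. b \<in> Borel \<Longrightarrow> P g \<Longrightarrow> P (g ** b)" and g: "g \<in> SL4"
  shows "coset g \<in> flag_locus P \<longleftrightarrow> P g"
proof
  assume "coset g \<in> flag_locus P"
  then obtain g' where "coset g = coset g'" "P g'" unfolding flag_locus_def by blast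
  then show "P g" using right coset_eqD by blast
next
  assume "P g"
  then show "coset g \<in> flag_locus P" using g unfolding flag_locus_def by blast
qed

lemma closedin_flag_locus:
  assumes right: "\<And>g b. b \<in> Borel \<Longrightarrow> P g \<Longrightarrow> P (g ** b)" and closed: "closed {g. P g}"
  shows "closedin flag_top (flag_locus P)"
proof -
  have "{g \<in> SL4. coset g \<in> flag - flag_locus P} = SL4 \<inter> - {g. P g}"
    using coset_in_flag_locus_iff[where P = P, OF right] coset_in_flag by blast
  moreover have "openin (top_of_set SL4) (SL4 \<inter> - {g. P g})"
    using closed by (simp add: openin_open_Int open_Compl)
  ultimately have "openin flag_top (flag - flag_locus P)" unfolding openin_flag_top by simp
  moreover have "flag_locus P \<subseteq> flag" unfolding flag_locus_def using coset_in_flag by blast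
  ultimately show ?thesis unfolding closedin_def topspace_flag_top by (simp add: double_diff)
qed

definition schubert_cell :: "(4 \<Rightarrow> 4) \<Rightarrow> mat4 set set" where
  "schubert_cell v = coset ` {b1 ** wdot v ** b2 | b1 b2. b1 \<in> Borel \<and> b2 \<in> Borel}"

lemma Borel_double_coset_SL4:
  assumes "bij v" "b1 \<in> Borel" "b2 \<in> Borel" shows "b1 ** wdot v ** b2 \<in> SL4"
  using wdot_scaled_perm_mat[OF assms(1)] assms(2,3) SL4_mult Borel_SL4 by metis

lemma schubert_cell_subset: assumes "bij v" shows "schubert_cell v \<subseteq> schubert v"
proof -
  have "schubert_cell v \<subseteq> topspace flag_top"
    unfolding schubert_cell_def topspace_flag_top
    using Borel_double_coset_SL4[OF assms] coset_in_flag by blast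
  then show ?thesis unfolding schubert_def schubert_cell_def[symmetric] by (rule closure_of_subset)
qed

lemma schubert_subset_flag_locus:
  assumes right: "\<And>g b. b \<in> Borel \<Longrightarrow> P g \<Longrightarrow> P (g ** b)"
    and left: "\<And>g b. b \<in> Borel \<Longrightarrow> P g \<Longrightarrow> P (b ** g)"
    and closed: "closed {g. P g}" and v: "bij v" and Pv: "P (wdot v)"
  shows "schubert v \<subseteq> flag_locus P"
proof -
  have "coset (b1 ** wdot v ** b2) \<in> flag_locus P" if "b1 \<in> Borel" "b2 \<in> Borel" for b1 b2
    using Borel_double_coset_SL4[OF v that] right[OF that(2) left[OF that(1) Pv]]
    unfolding flag_locus_def by blast
  then have "schubert_cell v \<subseteq> flag_locus P" unfolding schubert_cell_def by blast
  then show ?thesis unfolding schubert_def schubert_cell_def[symmetric]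
    by (rule closure_of_minimal[OF _ closedin_flag_locus[OF right closed]])
qed

lemma stable_core_of_hess_var:
  assumes H: "hessenberg_space H" and v: "bij v" and eq: "hess_var x H = schubert v"
  shows "x \<in> stable_core v H"
  unfolding stable_core_def
proof (clarify)
  fix b assume b: "b \<in> Borel"
  obtain c where c: "c \<noteq> 0" "wdot v = cscale c (perm_mat v)" "wdot v \<in> SL4"
    using wdot_scaled_perm_mat[OF v] by blast
  let ?V = "wdot v"
  have "coset (b ** ?V ** mat 1) \<in> schubert_cell v" unfolding schubert_cell_def using b Borel_one by blast
  then have "coset (b ** ?V) \<in> hess_var x H" using schubert_cell_subset[OF v] eq by auto
  then obtain g where g: "coset (b ** ?V) = coset g" "g \<in> SL4" "matrix_inv g ** x ** g \<in> H"
    unfolding hess_var_def by blast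
  then obtain b' where b': "b' \<in> Borel" "b ** ?V = g ** b'" using coset_eqD by blast
  have dets: "det g \<noteq> 0" "det b' \<noteq> 0" "det b \<noteq> 0" "det ?V \<noteq> 0"
    using g(2) c(3) Borel_det[OF b'(1)] Borel_det[OF b] unfolding SL4_def by simp_all
  have "matrix_inv ?V ** (matrix_inv b ** x ** b) ** ?V = matrix_inv (b ** ?V) ** x ** (b ** ?V)"
    using matrix_inv_mult[OF dets(3,4)] by (simp add: matrix_mul_assoc)
  also have "\<dots> = matrix_inv b' ** (matrix_inv g ** x ** g) ** b'"
    unfolding b'(2) matrix_inv_mult[OF dets(1,2)] by (simp add: matrix_mul_assoc)
  finally show "perm_conj v (matrix_inv b ** x ** b) \<in> H"
    using hessenberg_conj_Borel[OF H g(3) b'(1)] conj_scaled_perm_mat[OF v c(1)] c(2) by simp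
qed

lemma hess_var_ne_schubert:
  assumes right: "\<And>g b. b \<in> Borel \<Longrightarrow> P g \<Longrightarrow> P (g ** b)"
    and left: "\<And>g b. b \<in> Borel \<Longrightarrow> P g \<Longrightarrow> P (b ** g)"
    and closed: "closed {g. P g}" and v: "bij v" and Pv: "P (wdot v)"
    and u: "bij u" and Pu: "\<And>c. c \<noteq> 0 \<Longrightarrow> \<not> P (cscale c (perm_mat u))"
    and x: "perm_conj u x \<in> H"
  shows "hess_var x H \<noteq> schubert v"
proof
  assume eq: "hess_var x H = schubert v"
  obtain c where c: "c \<noteq> 0" "cscale c (perm_mat u) \<in> SL4" using scaled_perm_mat_in_SL4[OF u] by blast
  have "coset (cscale c (perm_mat u)) \<in> hess_var x H"
    using conj_scaled_perm_mat[OF u c(1)] x c(2) unfolding hess_var_def by auto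
  then have "coset (cscale c (perm_mat u)) \<in> flag_locus P"
    using eq schubert_subset_flag_locus[OF right left closed v Pv] by blast
  then show False using coset_in_flag_locus_iff[where P = P, OF right c(2)] Pu[OF c(1)] by blast
qed

section \<open>Tracking matrix units from the core into \<open>H\<close>\<close>

definition forces_unit :: "(4 \<Rightarrow> 4) \<Rightarrow> 4 \<Rightarrow> 4 \<Rightarrow> 4 \<Rightarrow> 4 \<Rightarrow> bool" where
  "forces_unit v k l p q \<longleftrightarrow> (\<exists>k' l'. northeast k' l' k l \<and> northeast p q (inv v k') (inv v l'))"

lemma stable_core_forces_unit:
  assumes H: "hessenberg_space H" and v: "bij v" and E: "unit_mat k l \<in> stable_core v H"
    and tr: "forces_unit v k l p q"
  shows "unit_mat p q \<in> H"
proof -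
  obtain k' l' where ne: "northeast k' l' k l" and ne': "northeast p q (inv v k') (inv v l')"
    using tr unfolding forces_unit_def by blast
  have "unit_mat k' l' \<in> stable_core v H"
    using borel_stable_northeast[OF stable_core_borel_stable[OF hessenberg_csubspace[OF H]] E ne] .
  then have "unit_mat (inv v k') (inv v l') \<in> H"
    using stable_core_perm_conj perm_conj_unit_mat[OF v] by fastforce
  then show ?thesis using borel_stable_northeast[OF hessenberg_borel_stable[OF H] _ ne'] by blast
qed

lemma perm_conj_in_hessenberg:
  assumes H: "hessenberg_space H" and v: "bij v" and u: "bij u" and x: "x \<in> stable_core v H"
    \<comment> \<open>\<open>(c,d)\<close>: the matrix unit whose membership in \<open>H\<close> splits the argument into two cases\<close>
    and off: "\<And>i j. i \<noteq> j \<Longrightarrow> forces_unit v (u i) (u j) i j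
      \<or> forces_unit v (u i) (u j) c d \<and> unit_mat c d \<notin> H \<or> northeast i j c d \<and> unit_mat c d \<in> H"
    and diag: "diag_part (perm_conj u x) \<in> H"
  shows "perm_conj u x \<in> H"
proof (rule csubspace_memI[OF hessenberg_csubspace[OF H] _ diag])
  have K: "borel_stable core_weights (stable_core v H)"
    using stable_core_borel_stable[OF hessenberg_csubspace[OF H]] .
  fix i j assume ij: "i \<noteq> j" "perm_conj u x $ i $ j \<noteq> 0"
  have "u i \<noteq> u j" using ij(1) bij_is_inj[OF u] by (auto dest: injD)
  then have E: "unit_mat (u i) (u j) \<in> stable_core v H"
    using unit_mat_in_borel_stable[OF K separating_core_weights x] ij(2) by simp
  show "unit_mat i j \<in> H"
    using off[OF ij(1)] stable_core_forces_unit[OF H v E]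
      borel_stable_northeast[OF hessenberg_borel_stable[OF H]] by blast
qed

lemma stable_core_unit_of_diag:
  assumes H: "hessenberg_space H" and x: "x \<in> stable_core v H" and kl: "k < l"
    and ne: "x$k$k \<noteq> x$l$l"
  shows "unit_mat k l \<in> stable_core v H"
proof -
  have K: "borel_stable core_weights (stable_core v H)"
    using stable_core_borel_stable[OF hessenberg_csubspace[OF H]] .
  show ?thesis
    using borel_stable_unit_of_diag[OF K diag_part_in_borel_stable[OF K separating_core_weights x]
        _ kl] ne by simp
qed

lemma stable_core_diag_part:
  assumes H: "hessenberg_space H" and x: "x \<in> stable_core v H"
  shows "perm_conj v (diag_part x) \<in> H"
  by (rule stable_core_perm_conj[OF diag_part_in_borel_stable[OF
        stable_core_borel_stable[OF hessenberg_csubspace[OF H]] separating_core_weights x]])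

lemma diag_diff_in_hessenberg:
  assumes H: "hessenberg_space H" and v: "bij v" and x: "x \<in> stable_core v H"
    and kl: "k < l" and tr: "forces_unit v k l p q" and qp: "q < p"
  shows "cscale (x$k$k - x$l$l) (unit_mat q q - unit_mat p p) \<in> H"
proof (cases "x$k$k = x$l$l")
  case True
  then show ?thesis using csubspaceD(1)[OF hessenberg_csubspace[OF H]] by simp
next
  case False
  then have "unit_mat p q \<in> H"
    using stable_core_forces_unit[OF H v stable_core_unit_of_diag[OF H x kl] tr] by blast
  then show ?thesis
    using borel_stable_diag_of_lower[OF hessenberg_borel_stable[OF H] _ qp]
      csubspaceD(3)[OF hessenberg_csubspace[OF H]] by blast
qed

lemma diag_eq_of_forces_unit:
  assumes H: "hessenberg_space H" and v: "bij v" and x: "x \<in> stable_core v H"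
    and kl: "k < l" and tr: "forces_unit v k l c d" and C: "unit_mat c d \<notin> H"
  shows "x$k$k = x$l$l"
  using stable_core_forces_unit[OF H v stable_core_unit_of_diag[OF H x kl] tr] C by blast

lemma hessenberg_diag_of_northeast:
  assumes H: "hessenberg_space H" and C: "unit_mat c d \<in> H" and ne: "northeast p q c d" and qp: "q < p"
  shows "cscale t (unit_mat q q - unit_mat p p) \<in> H"
  using borel_stable_diag_of_lower[OF hessenberg_borel_stable[OF H]
      borel_stable_northeast[OF hessenberg_borel_stable[OF H] C ne] qp]
    csubspaceD(3)[OF hessenberg_csubspace[OF H]] by blast

definition u3124 :: "4 \<Rightarrow> 4" where
  "u3124 = (\<lambda>i. if i = 0 then 2 else if i = 1 then 0 else if i = 2 then 1 else 3)"

definition u2314 :: "4 \<Rightarrow> 4" where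
  "u2314 = (\<lambda>i. if i = 0 then 1 else if i = 1 then 2 else if i = 2 then 0 else 3)"

definition u1423 :: "4 \<Rightarrow> 4" where
  "u1423 = (\<lambda>i. if i = 0 then 0 else if i = 1 then 3 else if i = 2 then 1 else 2)"

definition u1342 :: "4 \<Rightarrow> 4" where
  "u1342 = (\<lambda>i. if i = 0 then 0 else if i = 1 then 2 else if i = 2 then 3 else 1)"

lemma perm_values:
  "u3124 0 = 2" "u3124 1 = 0" "u3124 2 = 1" "u3124 3 = 3"
  "u2314 0 = 1" "u2314 1 = 2" "u2314 2 = 0" "u2314 3 = 3"
  "u1423 0 = 0" "u1423 1 = 3" "u1423 2 = 1" "u1423 3 = 2"
  "u1342 0 = 0" "u1342 1 = 2" "u1342 2 = 3" "u1342 3 = 1"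
  "w2341 0 = 1" "w2341 1 = 2" "w2341 2 = 3" "w2341 3 = 0"
  "w4123 0 = 3" "w4123 1 = 0" "w4123 2 = 1" "w4123 3 = 2"
  by (simp_all add: u3124_def u2314_def u1423_def u1342_def w2341_def w4123_def)

lemma bij_of_inverse: "(\<And>x::4. g (f x) = x) \<Longrightarrow> (\<And>y. f (g y) = y) \<Longrightarrow> bij f"
  by (rule o_bij[of g]) (auto simp: fun_eq_iff)

lemma w_inverses: "w4123 (w2341 x) = x" "w2341 (w4123 x) = x"
  by (cases x rule: index_4_cases; simp add: perm_values)+

lemma bij_perms:
  "bij u3124" "bij u2314" "bij u1423" "bij u1342" "bij w2341" "bij w4123"
proof -
  have "u2314 (u3124 x) = x" "u3124 (u2314 x) = x"
       "u1342 (u1423 x) = x" "u1423 (u1342 x) = x" for x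
    by (cases x rule: index_4_cases; simp add: perm_values)+
  then show "bij u3124" "bij u2314" "bij u1423" "bij u1342" "bij w2341" "bij w4123"
    using bij_of_inverse[of u2314 u3124] bij_of_inverse[of u3124 u2314]
      bij_of_inverse[of u1342 u1423] bij_of_inverse[of u1423 u1342]
      bij_of_inverse[of w4123 w2341] bij_of_inverse[of w2341 w4123] w_inverses by blast+
qed

lemma inv_w: "inv w2341 = w4123" "inv w4123 = w2341"
  by (rule inv_equality, simp add: w_inverses, simp add: w_inverses)+

lemmas position_simps = forces_unit_def northeast_def ex_4 all_4 inv_w perm_values le_less less_4_iff

lemma upper_tri_mult_entries:
  assumes "upper_tri b"
  shows "(g ** b)$i$0 = g$i$0 * b$0$0"
    "(g ** b)$i$1 = g$i$0 * b$0$1 + g$i$1 * b$1$1"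
    "(g ** b)$i$2 = g$i$0 * b$0$2 + g$i$1 * b$1$2 + g$i$2 * b$2$2"
    "(b ** g)$3$j = b$3$3 * g$3$j"
    "(b ** g)$2$j = b$2$2 * g$2$j + b$2$3 * g$3$j"
    "(b ** g)$1$j = b$1$1 * g$1$j + b$1$2 * g$2$j + b$1$3 * g$3$j"
  using upper_triD[OF assms] less_4_numerals by (simp_all add: matrix_mul_nth sum_UNIV_4)

section \<open>The case \<open>v = [2341]\<close>\<close>

text \<open>The southwest pattern of zeros of the permutation matrix of \<open>[2341]\<close>.\<close>

definition schubert_cond_2341 :: "mat4 \<Rightarrow> bool" where
  "schubert_cond_2341 g \<longleftrightarrow> g$2$0 = 0 \<and> g$3$0 = 0 \<and> g$3$1 = 0"

lemma hess_var_ne_schubert_2341_of: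
  assumes "bij u" "\<And>c. c \<noteq> 0 \<Longrightarrow> \<not> schubert_cond_2341 (cscale c (perm_mat u))"
    and "perm_conj u x \<in> H"
  shows "hess_var x H \<noteq> schubert w2341"
proof (rule hess_var_ne_schubert[where P = schubert_cond_2341, OF _ _ _ bij_perms(5) _ assms])
  show "schubert_cond_2341 (g ** b)" "schubert_cond_2341 (b ** g)"
    if "b \<in> Borel" "schubert_cond_2341 g" for g b
    using that unfolding schubert_cond_2341_def Borel_def by (simp_all add: upper_tri_mult_entries)
  show "closed {g. schubert_cond_2341 g}"
    unfolding schubert_cond_2341_def by (intro closed_Collect_conj closed_Collect_eq continuous_intros)
  show "schubert_cond_2341 (wdot w2341)"
    using wdot_scaled_perm_mat[OF bij_perms(5)] unfolding schubert_cond_2341_def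
    by (auto simp: perm_values)
qed

lemma perm_conj_u3124_in_hessenberg:
  assumes H: "hessenberg_space H" and C: "unit_mat 3 1 \<notin> H" and x: "x \<in> stable_core w2341 H"
  shows "perm_conj u3124 x \<in> H"
proof (rule perm_conj_in_hessenberg[OF H bij_perms(5) bij_perms(1) x, where c = 3 and d = 1])
  have "\<forall>i j. i \<noteq> j \<longrightarrow> forces_unit w2341 (u3124 i) (u3124 j) i j
      \<or> forces_unit w2341 (u3124 i) (u3124 j) 3 1"
    by (simp add: position_simps)
  then show "\<And>i j. i \<noteq> j \<Longrightarrow> forces_unit w2341 (u3124 i) (u3124 j) i j
      \<or> forces_unit w2341 (u3124 i) (u3124 j) 3 1 \<and> unit_mat 3 1 \<notin> H
      \<or> northeast i j 3 1 \<and> unit_mat 3 1 \<in> H"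
    using C by blast
next
  have x02: "x$0$0 = x$2$2"
    by (rule diag_eq_of_forces_unit[OF H bij_perms(5) x _ _ C]) (simp_all add: position_simps)
  have d01: "cscale (x$0$0 - x$1$1) (unit_mat 0 0 - unit_mat 2 2) \<in> H"
    by (rule diag_diff_in_hessenberg[OF H bij_perms(5) x]) (simp_all add: position_simps)
  have d03: "cscale (x$0$0 - x$3$3) (unit_mat 2 2 - unit_mat 3 3) \<in> H"
    by (rule diag_diff_in_hessenberg[OF H bij_perms(5) x]) (simp_all add: position_simps)
  have "diag_part (perm_conj u3124 x) = perm_conj w2341 (diag_part x)
      + cscale (x$0$0 - x$1$1) (unit_mat 0 0 - unit_mat 2 2)
      + cscale (x$0$0 - x$3$3) (unit_mat 2 2 - unit_mat 3 3)"
  proof (rule mat4_eqI)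
    fix i j :: 4
    show "diag_part (perm_conj u3124 x) $ i $ j = (perm_conj w2341 (diag_part x)
        + cscale (x$0$0 - x$1$1) (unit_mat 0 0 - unit_mat 2 2)
        + cscale (x$0$0 - x$3$3) (unit_mat 2 2 - unit_mat 3 3)) $ i $ j"
      using x02 by (cases i rule: index_4_cases; cases j rule: index_4_cases)
        (simp_all add: perm_values algebra_simps)
  qed
  then show "diag_part (perm_conj u3124 x) \<in> H"
    using stable_core_diag_part[OF H x] d01 d03 by (simp add: csubspaceD(2)[OF hessenberg_csubspace[OF H]])
qed

lemma perm_conj_u1423_in_hessenberg:
  assumes H: "hessenberg_space H" and C: "unit_mat 3 1 \<in> H" and x: "x \<in> stable_core w2341 H"
  shows "perm_conj u1423 x \<in> H"
proof (rule perm_conj_in_hessenberg[OF H bij_perms(5) bij_perms(3) x, where c = 3 and d = 1])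
  have "\<forall>i j. i \<noteq> j \<longrightarrow> forces_unit w2341 (u1423 i) (u1423 j) i j \<or> northeast i j 3 1"
    by (simp add: position_simps)
  then show "\<And>i j. i \<noteq> j \<Longrightarrow> forces_unit w2341 (u1423 i) (u1423 j) i j
      \<or> forces_unit w2341 (u1423 i) (u1423 j) 3 1 \<and> unit_mat 3 1 \<notin> H
      \<or> northeast i j 3 1 \<and> unit_mat 3 1 \<in> H"
    using C by blast
next
  have d01: "cscale (x$0$0 - x$1$1) (unit_mat 0 0 - unit_mat 2 2) \<in> H"
    by (rule diag_diff_in_hessenberg[OF H bij_perms(5) x]) (simp_all add: position_simps)
  have d02: "cscale (x$0$0 - x$2$2) (unit_mat 1 1 - unit_mat 3 3) \<in> H"
    by (rule diag_diff_in_hessenberg[OF H bij_perms(5) x]) (simp_all add: position_simps)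
  have d03: "cscale (x$3$3 - x$0$0) (unit_mat 1 1 - unit_mat 2 2) \<in> H"
    by (rule hessenberg_diag_of_northeast[OF H C]) (simp_all add: position_simps)
  have "diag_part (perm_conj u1423 x) = perm_conj w2341 (diag_part x)
      + cscale (x$0$0 - x$1$1) (unit_mat 0 0 - unit_mat 2 2)
      + cscale (x$0$0 - x$2$2) (unit_mat 1 1 - unit_mat 3 3)
      + cscale (x$3$3 - x$0$0) (unit_mat 1 1 - unit_mat 2 2)"
  proof (rule mat4_eqI)
    fix i j :: 4
    show "diag_part (perm_conj u1423 x) $ i $ j = (perm_conj w2341 (diag_part x)
        + cscale (x$0$0 - x$1$1) (unit_mat 0 0 - unit_mat 2 2)
        + cscale (x$0$0 - x$2$2) (unit_mat 1 1 - unit_mat 3 3)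
        + cscale (x$3$3 - x$0$0) (unit_mat 1 1 - unit_mat 2 2)) $ i $ j"
      by (cases i rule: index_4_cases; cases j rule: index_4_cases) (simp_all add: perm_values algebra_simps)
  qed
  then show "diag_part (perm_conj u1423 x) \<in> H"
    using stable_core_diag_part[OF H x] d01 d02 d03
    by (simp add: csubspaceD(2)[OF hessenberg_csubspace[OF H]])
qed

lemma hess_var_ne_schubert_2341:
  assumes H: "hessenberg_space H" shows "hess_var x H \<noteq> schubert w2341"
proof
  assume eq: "hess_var x H = schubert w2341"
  then have x: "x \<in> stable_core w2341 H" by (rule stable_core_of_hess_var[OF H bij_perms(5)])
  show False
  proof (cases "unit_mat 3 1 \<in> H")
    case True
    then show False
      using hess_var_ne_schubert_2341_of[OF bij_perms(3) _ perm_conj_u1423_in_hessenberg[OF H True x]]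
        eq by (simp add: schubert_cond_2341_def perm_values)
  next
    case False
    then show False
      using hess_var_ne_schubert_2341_of[OF bij_perms(1) _ perm_conj_u3124_in_hessenberg[OF H False x]]
        eq by (simp add: schubert_cond_2341_def perm_values)
  qed
qed

section \<open>The case \<open>v = [4123]\<close>\<close>

text \<open>The southwest submatrices in rows \<open>\<ge> 1\<close>, columns \<open>\<le> 1\<close> and in rows \<open>\<ge> 2\<close>,
  columns \<open>\<le> 2\<close> have rank at most one.\<close>

definition schubert_cond_4123 :: "mat4 \<Rightarrow> bool" where
  "schubert_cond_4123 g \<longleftrightarrow> g$1$0 * g$2$1 - g$2$0 * g$1$1 = 0 \<and> g$1$0 * g$3$1 - g$3$0 * g$1$1 = 0
     \<and> g$2$0 * g$3$1 - g$3$0 * g$2$1 = 0 \<and> g$2$0 * g$3$2 - g$3$0 * g$2$2 = 0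
     \<and> g$2$1 * g$3$2 - g$3$1 * g$2$2 = 0"

lemma hess_var_ne_schubert_4123_of:
  assumes "bij u" "\<And>c. c \<noteq> 0 \<Longrightarrow> \<not> schubert_cond_4123 (cscale c (perm_mat u))"
    and "perm_conj u x \<in> H"
  shows "hess_var x H \<noteq> schubert w4123"
proof (rule hess_var_ne_schubert[where P = schubert_cond_4123, OF _ _ _ bij_perms(6) _ assms])
  show "schubert_cond_4123 (g ** b)" "schubert_cond_4123 (b ** g)"
    if "b \<in> Borel" "schubert_cond_4123 g" for g b
  proof -
    have "upper_tri b" using that(1) unfolding Borel_def by simp
    then show "schubert_cond_4123 (g ** b)" "schubert_cond_4123 (b ** g)"
      using that(2) unfolding schubert_cond_4123_def upper_tri_mult_entries[OF \<open>upper_tri b\<close>]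
      by algebra+
  qed
  show "closed {g. schubert_cond_4123 g}"
    unfolding schubert_cond_4123_def by (intro closed_Collect_conj closed_Collect_eq continuous_intros)
  show "schubert_cond_4123 (wdot w4123)"
    using wdot_scaled_perm_mat[OF bij_perms(6)] unfolding schubert_cond_4123_def
    by (auto simp: perm_values)
qed

lemma perm_conj_u1342_in_hessenberg:
  assumes H: "hessenberg_space H" and C: "unit_mat 2 0 \<notin> H" and x: "x \<in> stable_core w4123 H"
  shows "perm_conj u1342 x \<in> H"
proof (rule perm_conj_in_hessenberg[OF H bij_perms(6) bij_perms(4) x, where c = 2 and d = 0])
  have "\<forall>i j. i \<noteq> j \<longrightarrow> forces_unit w4123 (u1342 i) (u1342 j) i j
      \<or> forces_unit w4123 (u1342 i) (u1342 j) 2 0"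
    by (simp add: position_simps)
  then show "\<And>i j. i \<noteq> j \<Longrightarrow> forces_unit w4123 (u1342 i) (u1342 j) i j
      \<or> forces_unit w4123 (u1342 i) (u1342 j) 2 0 \<and> unit_mat 2 0 \<notin> H
      \<or> northeast i j 2 0 \<and> unit_mat 2 0 \<in> H"
    using C by blast
next
  have x12: "x$1$1 = x$2$2"
    by (rule diag_eq_of_forces_unit[OF H bij_perms(6) x _ _ C]) (simp_all add: position_simps)
  have d01: "cscale (x$0$0 - x$1$1) (unit_mat 0 0 - unit_mat 1 1) \<in> H"
    by (rule diag_diff_in_hessenberg[OF H bij_perms(6) x]) (simp_all add: position_simps)
  have d13: "cscale (x$1$1 - x$3$3) (unit_mat 0 0 - unit_mat 2 2) \<in> H"
    by (rule diag_diff_in_hessenberg[OF H bij_perms(6) x]) (simp_all add: position_simps)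
  have "diag_part (perm_conj u1342 x) = perm_conj w4123 (diag_part x)
      + cscale (x$0$0 - x$1$1) (unit_mat 0 0 - unit_mat 1 1)
      + cscale (x$1$1 - x$3$3) (unit_mat 0 0 - unit_mat 2 2)"
  proof (rule mat4_eqI)
    fix i j :: 4
    show "diag_part (perm_conj u1342 x) $ i $ j = (perm_conj w4123 (diag_part x)
        + cscale (x$0$0 - x$1$1) (unit_mat 0 0 - unit_mat 1 1)
        + cscale (x$1$1 - x$3$3) (unit_mat 0 0 - unit_mat 2 2)) $ i $ j"
      using x12 by (cases i rule: index_4_cases; cases j rule: index_4_cases)
        (simp_all add: perm_values algebra_simps)
  qed
  then show "diag_part (perm_conj u1342 x) \<in> H"
    using stable_core_diag_part[OF H x] d01 d13 by (simp add: csubspaceD(2)[OF hessenberg_csubspace[OF H]])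
qed

lemma perm_conj_u2314_in_hessenberg:
  assumes H: "hessenberg_space H" and C: "unit_mat 2 0 \<in> H" and x: "x \<in> stable_core w4123 H"
  shows "perm_conj u2314 x \<in> H"
proof (rule perm_conj_in_hessenberg[OF H bij_perms(6) bij_perms(2) x, where c = 2 and d = 0])
  have "\<forall>i j. i \<noteq> j \<longrightarrow> forces_unit w4123 (u2314 i) (u2314 j) i j \<or> northeast i j 2 0"
    by (simp add: position_simps)
  then show "\<And>i j. i \<noteq> j \<Longrightarrow> forces_unit w4123 (u2314 i) (u2314 j) i j
      \<or> forces_unit w4123 (u2314 i) (u2314 j) 2 0 \<and> unit_mat 2 0 \<notin> H
      \<or> northeast i j 2 0 \<and> unit_mat 2 0 \<in> H"
    using C by blast
next
  have d01: "cscale (x$1$1 - x$0$0) (unit_mat 0 0 - unit_mat 2 2) \<in> H"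
    by (rule hessenberg_diag_of_northeast[OF H C]) (simp_all add: position_simps)
  have d02: "cscale (x$0$0 - x$2$2) (unit_mat 0 0 - unit_mat 1 1) \<in> H"
    by (rule diag_diff_in_hessenberg[OF H bij_perms(6) x]) (simp_all add: position_simps)
  have d23: "cscale (x$2$2 - x$3$3) (unit_mat 0 0 - unit_mat 3 3) \<in> H"
    by (rule diag_diff_in_hessenberg[OF H bij_perms(6) x]) (simp_all add: position_simps)
  have "diag_part (perm_conj u2314 x) = perm_conj w4123 (diag_part x)
      + cscale (x$1$1 - x$0$0) (unit_mat 0 0 - unit_mat 2 2)
      + cscale (x$0$0 - x$2$2) (unit_mat 0 0 - unit_mat 1 1)
      + cscale (x$2$2 - x$3$3) (unit_mat 0 0 - unit_mat 3 3)"
  proof (rule mat4_eqI)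
    fix i j :: 4
    show "diag_part (perm_conj u2314 x) $ i $ j = (perm_conj w4123 (diag_part x)
        + cscale (x$1$1 - x$0$0) (unit_mat 0 0 - unit_mat 2 2)
        + cscale (x$0$0 - x$2$2) (unit_mat 0 0 - unit_mat 1 1)
        + cscale (x$2$2 - x$3$3) (unit_mat 0 0 - unit_mat 3 3)) $ i $ j"
      by (cases i rule: index_4_cases; cases j rule: index_4_cases) (simp_all add: perm_values algebra_simps)
  qed
  then show "diag_part (perm_conj u2314 x) \<in> H"
    using stable_core_diag_part[OF H x] d01 d02 d23
    by (simp add: csubspaceD(2)[OF hessenberg_csubspace[OF H]])
qed

lemma hess_var_ne_schubert_4123:
  assumes H: "hessenberg_space H" shows "hess_var x H \<noteq> schubert w4123"
proof
  assume eq: "hess_var x H = schubert w4123"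
  then have x: "x \<in> stable_core w4123 H" by (rule stable_core_of_hess_var[OF H bij_perms(6)])
  show False
  proof (cases "unit_mat 2 0 \<in> H")
    case True
    then show False
      using hess_var_ne_schubert_4123_of[OF bij_perms(2) _ perm_conj_u2314_in_hessenberg[OF H True x]]
        eq by (simp add: schubert_cond_4123_def perm_values)
  next
    case False
    then show False
      using hess_var_ne_schubert_4123_of[OF bij_perms(4) _ perm_conj_u1342_in_hessenberg[OF H False x]]
        eq by (simp add: schubert_cond_4123_def perm_values)
  qed
qed

theorem lemma4p5:
  assumes "w \<in> {w4123, w2341}"
  shows "\<not> (\<exists>x H. x \<in> sl4 \<and> hessenberg_space H \<and> hess_var x H = schubert (inv w))"
proof
  assume "\<exists>x H. x \<in> sl4 \<and> hessenberg_space H \<and> hess_var x H = schubert (inv w)"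
  then obtain x H where H: "hessenberg_space H" and eq: "hess_var x H = schubert (inv w)" by blast
  from assms have "inv w = w2341 \<or> inv w = w4123" by (auto simp: inv_w)
  then show False using hess_var_ne_schubert_2341[OF H] hess_var_ne_schubert_4123[OF H] eq by auto
qed

end
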